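(* Let $q$ be a prime power, $t\ge1$, $s<t$ a nonnegative integer, and $W=\{0,w_1,\dots,w_{q^s-1}\}$ an $\mathbb{F}_q$-subspace of $\mathbb{F}_{q^t}$ of dimension $s$. Let $A\subseteq\mathbb{F}_{q^t}$, $\alpha^*\in A$, let $\{\beta_1,\dots,\beta_t\}$ be an arbitrary $\mathbb{F}_q$-basis of $\mathbb{F}_{q^t}$, and for $i=1,\dots,t$ let \[ g_i(x)=\beta_i\prod_{j=1}^{q^s-1}\Big(x-\big(\alpha^*-w_j^{-1}\beta_i\big)\Big). \] Then for every $\alpha\in A\setminus\{\alpha^*\}$, the set $\{g_1(\alpha),\dots,g_t(\alpha)\}$ has rank at most $t-s$ over $\mathbb{F}_q$. *)

theory Defs
  imports Main "HOL-Computational_Algebra.Primes"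
begin

definition is_subfield :: "'a::field set \<Rightarrow> bool" where
  "is_subfield F \<longleftrightarrow> 0 \<in> F \<and> 1 \<in> F \<and> (\<forall>x\<in>F. \<forall>y\<in>F. x + y \<in> F \<and> x * y \<in> F)
     \<and> (\<forall>x\<in>F. - x \<in> F \<and> inverse x \<in> F)"

definition F_span :: "'a::field set \<Rightarrow> 'a set \<Rightarrow> 'a set" where
  "F_span F S = {(\<Sum>v\<in>T. c v * v) | T c. finite T \<and> T \<subseteq> S \<and> (\<forall>v\<in>T. c v \<in> F)}"

definition F_independent :: "'a::field set \<Rightarrow> 'a set \<Rightarrow> bool" where
  "F_independent F S \<longleftrightarrow> finite S \<and>
     (\<forall>c. (\<forall>v\<in>S. c v \<in> F) \<and> (\<Sum>v\<in>S. c v * v) = 0 \<longrightarrow> (\<forall>v\<in>S. c v = 0))"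

definition F_subspace :: "'a::field set \<Rightarrow> 'a set \<Rightarrow> bool" where
  "F_subspace F W \<longleftrightarrow> 0 \<in> W \<and> (\<forall>x\<in>W. \<forall>y\<in>W. x + y \<in> W) \<and> (\<forall>c\<in>F. \<forall>x\<in>W. c * x \<in> W)"

definition F_basis :: "'a::field set \<Rightarrow> 'a set \<Rightarrow> 'a set \<Rightarrow> bool" where
  "F_basis F B W \<longleftrightarrow> B \<subseteq> W \<and> F_independent F B \<and> F_span F B = W"

definition F_dim_eq :: "'a::field set \<Rightarrow> 'a set \<Rightarrow> nat \<Rightarrow> bool" where
  "F_dim_eq F W n \<longleftrightarrow> (\<exists>B. F_basis F B W \<and> card B = n)"

definition F_rank :: "'a::field set \<Rightarrow> 'a set \<Rightarrow> nat" where
  "F_rank F S = Max {card T | T. T \<subseteq> S \<and> F_independent F T}"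

end

theory Submission
  imports Defs "HOL-Computational_Algebra.Polynomial" "HOL-Library.FuncSet"
begin

text \<open>Put \<open>\<gamma> = \<alpha> - \<alpha>\<^sup>*\<close> and \<open>V = \<gamma> W\<close>. Pulling the factor \<open>w\<^sup>-\<^sup>1\<close> out of every term shows
  \<open>g\<^sub>i(\<alpha>) = C \<cdot> M(\<beta>\<^sub>i)\<close>, where \<open>C = \<Prod>w\<^sup>-\<^sup>1\<close> and \<open>M(x) = \<Prod>\<^sub>v\<^sub>\<in>\<^sub>V (x - v)\<close> is the subspace
  polynomial of \<open>V\<close>. The map \<open>M\<close> is \<open>\<bbbF>\<^sub>q\<close>-linear with kernel \<open>V\<close>, so all \<open>g\<^sub>i(\<alpha>)\<close> lie in
  the \<open>\<bbbF>\<^sub>q\<close>-subspace \<open>C \<cdot> M(\<bbbF>\<^sub>q\<^sub>t)\<close> of size \<open>q\<^sup>t / q\<^sup>s\<close>, which bounds their rank by \<open>t - s\<close>.\<close>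

lemma subfield_minus_one: "is_subfield F \<Longrightarrow> -1 \<in> F"
  unfolding is_subfield_def by auto

lemma F_subspace_uminus:
  assumes "is_subfield F" "F_subspace F V" "x \<in> V"
  shows "- x \<in> V"
  using assms subfield_minus_one[OF assms(1)] unfolding F_subspace_def
  by (metis mult_minus1)

lemma F_subspace_scale:
  assumes "F_subspace F W"
  shows "F_subspace F ((*) \<gamma> ` W)"
  using assms unfolding F_subspace_def
  by (auto simp: image_iff distrib_left[symmetric] mult.left_commute)

lemma F_span_subset_F_subspace:
  assumes U: "F_subspace F U" and "T \<subseteq> U"
  shows "F_span F T \<subseteq> U"
proof
  fix x assume "x \<in> F_span F T"
  then obtain S c where x: "x = (\<Sum>v\<in>S. c v * v)" and S: "finite S" "S \<subseteq> U" "\<forall>v\<in>S. c v \<in> F"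
    using \<open>T \<subseteq> U\<close> unfolding F_span_def by blast
  from S show "x \<in> U" unfolding x
    by (induction S rule: finite_induct) (use U in \<open>auto simp: F_subspace_def\<close>)
qed

lemma card_F_span_F_independent:
  assumes sf: "is_subfield F" and ind: "F_independent F B"
  shows "card (F_span F B) = card F ^ card B"
proof -
  have finB: "finite B" using ind unfolding F_independent_def by simp
  define lincomb where "lincomb c = (\<Sum>v\<in>B. c v * v)" for c
  have "inj_on lincomb (B \<rightarrow>\<^sub>E F)"
  proof (rule inj_onI)
    fix c d assume c: "c \<in> B \<rightarrow>\<^sub>E F" and d: "d \<in> B \<rightarrow>\<^sub>E F" and "lincomb c = lincomb d"
    then have "(\<Sum>v\<in>B. (c v - d v) * v) = 0"
      by (simp add: lincomb_def left_diff_distrib sum_subtractf)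
    moreover have "\<forall>v\<in>B. c v - d v \<in> F"
      using c d sf unfolding is_subfield_def by (auto simp: PiE_iff) (metis diff_conv_add_uminus)
    ultimately have "\<forall>v\<in>B. c v - d v = 0"
      using ind unfolding F_independent_def by (auto dest!: spec[of _ "\<lambda>v. c v - d v"])
    then show "c = d" using c d by (intro PiE_ext) auto
  qed
  moreover have "lincomb ` (B \<rightarrow>\<^sub>E F) = F_span F B"
  proof
    show "lincomb ` (B \<rightarrow>\<^sub>E F) \<subseteq> F_span F B"
      unfolding F_span_def lincomb_def using finB by (auto simp: PiE_iff)
    show "F_span F B \<subseteq> lincomb ` (B \<rightarrow>\<^sub>E F)"
    proof
      fix x assume "x \<in> F_span F B"
      then obtain T c where x: "x = (\<Sum>v\<in>T. c v * v)" and T: "finite T" "T \<subseteq> B" "\<forall>v\<in>T. c v \<in> F"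
        unfolding F_span_def by blast
      define d where "d v = (if v \<in> B then if v \<in> T then c v else 0 else undefined)" for v
      have "d \<in> B \<rightarrow>\<^sub>E F"
        using T sf unfolding d_def is_subfield_def by (auto simp: PiE_iff extensional_def)
      moreover have "lincomb d = x"
        unfolding lincomb_def x d_def using T finB by (intro sum.mono_neutral_cong_right) auto
      ultimately show "x \<in> lincomb ` (B \<rightarrow>\<^sub>E F)" by blast
    qed
  qed
  ultimately have "card (F_span F B) = card (B \<rightarrow>\<^sub>E F)"
    by (metis card_image)
  also have "\<dots> = card F ^ card B" using finB by (simp add: card_PiE)
  finally show ?thesis .
qed

lemma card_F_dim_eq:
  assumes "is_subfield F" "F_dim_eq F W n"
  shows "card W = card F ^ n"
  using assms card_F_span_F_independent unfolding F_dim_eq_def F_basis_def by blast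

lemma F_rank_le_if_subset_F_subspace:
  assumes sf: "is_subfield F" and finF: "finite F"
    and U: "F_subspace F U" "finite U" "card U \<le> card F ^ n" and "S \<subseteq> U"
  shows "F_rank F S \<le> n"
proof -
  have "1 < card F"
    using sf finF card_mono[of F "{0, 1}"] unfolding is_subfield_def by auto
  have bound: "card T \<le> n" if "T \<subseteq> S" "F_independent F T" for T
  proof -
    have "card F ^ card T = card (F_span F T)"
      using card_F_span_F_independent[OF sf \<open>F_independent F T\<close>] by simp
    also have "\<dots> \<le> card U"
      using F_span_subset_F_subspace[OF U(1)] that \<open>S \<subseteq> U\<close> U(2) by (intro card_mono) auto
    finally show "card T \<le> n"
      using U(3) \<open>1 < card F\<close> by (meson order.trans power_le_imp_le_exp)
  qed
  have "F_independent F {}" unfolding F_independent_def by simp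
  then show ?thesis unfolding F_rank_def
    using bound by (intro Max.boundedI) (auto intro: finite_subset[of _ "{..n}"])
qed

lemma subfield_power_card:
  assumes sf: "is_subfield F" and finF: "finite F" and c: "c \<in> F"
  shows "c ^ card F = c"
proof (cases "c = 0")
  case True
  have "card F > 0" using sf finF unfolding is_subfield_def by (auto simp: card_gt_0_iff)
  then show ?thesis using True by simp
next
  case False
  let ?F' = "F - {0}"
  have "(\<Prod>x\<in>?F'. c * x) = (\<Prod>x\<in>?F'. x)"
    by (rule prod.reindex_bij_witness[where i="\<lambda>u. inverse c * u" and j="\<lambda>v. c * v"])
      (use sf c False in \<open>auto simp: is_subfield_def\<close>)
  then have "c ^ card ?F' * (\<Prod>x\<in>?F'. x) = 1 * (\<Prod>x\<in>?F'. x)"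
    by (simp add: prod.distrib)
  then have "c ^ card ?F' = 1"
    using finF by (metis mult_right_cancel prod_zero_iff DiffE insertI1 finite_Diff)
  moreover have "card F = Suc (card ?F')"
    using sf finF unfolding is_subfield_def by (metis card.remove)
  ultimately show ?thesis by simp
qed

lemma subfield_power_card_power:
  assumes "is_subfield F" "finite F" "c \<in> F"
  shows "c ^ (card F ^ n) = c"
  by (induction n) (simp_all add: power_mult subfield_power_card[OF assms])

definition subspace_poly :: "'a::field set \<Rightarrow> 'a \<Rightarrow> 'a" where
  "subspace_poly V x = (\<Prod>v\<in>V. x - v)"

lemma subspace_poly_eq_0_iff: "finite V \<Longrightarrow> subspace_poly V x = 0 \<longleftrightarrow> x \<in> V"
  by (simp add: subspace_poly_def)

lemma degree_lead_coeff_prod_linear: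
  fixes V :: "'a::field set"
  assumes "finite V"
  shows "degree (\<Prod>v\<in>V. [:y - v, 1:]) = card V" and "coeff (\<Prod>v\<in>V. [:y - v, 1:]) (card V) = 1"
proof -
  show d: "degree (\<Prod>v\<in>V. [:y - v, 1:]) = card V"
    by (subst degree_prod_eq_sum_degree) auto
  have "lead_coeff (\<Prod>v\<in>V. [:y - v, 1:]) = 1"
    by (simp add: lead_coeff_prod)
  with d show "coeff (\<Prod>v\<in>V. [:y - v, 1:]) (card V) = 1" by simp
qed

text \<open>For fixed \<open>y\<close>, \<open>M(x + y) - M(x) - M(y)\<close> is a polynomial in \<open>x\<close> of degree below \<open>|V|\<close>
  (the leading terms cancel) that vanishes on all of \<open>V\<close>, because translation by \<open>x \<in> V\<close>
  permutes \<open>V\<close>.\<close>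

lemma subspace_poly_add:
  fixes V :: "'a::field set"
  assumes fin: "finite V" and zero: "0 \<in> V" and add: "\<And>a b. a \<in> V \<Longrightarrow> b \<in> V \<Longrightarrow> a + b \<in> V"
    and uminus: "\<And>a. a \<in> V \<Longrightarrow> - a \<in> V"
  shows "subspace_poly V (x + y) = subspace_poly V x + subspace_poly V y"
proof -
  let ?n = "card V"
  have n: "?n \<ge> 1" using fin zero by (metis One_nat_def Suc_leI card_gt_0_iff empty_iff)
  define Q where "Q = (\<Prod>v\<in>V. [:y - v, 1:]) - (\<Prod>v\<in>V. [:0 - v, 1:]) - [:subspace_poly V y:]"
  have "coeff Q i = 0" if "i > ?n - 1" for i
  proof (cases "i = ?n")
    case True
    then show ?thesis
      using degree_lead_coeff_prod_linear[OF fin, of y] degree_lead_coeff_prod_linear[OF fin, of 0] n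
      by (simp add: Q_def coeff_pCons split: nat.split)
  next
    case False
    then have "i > ?n" using that by simp
    then show ?thesis
      using degree_lead_coeff_prod_linear(1)[OF fin, of y] degree_lead_coeff_prod_linear(1)[OF fin, of 0] n
      by (simp add: Q_def coeff_eq_0 coeff_pCons split: nat.split)
  qed
  then have degQ: "degree Q \<le> ?n - 1" by (simp add: degree_le)
  have roots: "V \<subseteq> {x. poly Q x = 0}"
  proof
    fix x assume x: "x \<in> V"
    have "poly (\<Prod>v\<in>V. [:y - v, 1:]) x = (\<Prod>v\<in>V. y - v)"
      unfolding poly_prod
      by (rule prod.reindex_bij_witness[where i="\<lambda>u. u + x" and j="\<lambda>v. v - x"])
        (use x add uminus in \<open>auto simp: algebra_simps\<close>, metis diff_conv_add_uminus)
    moreover have "poly (\<Prod>v\<in>V. [:0 - v, 1:]) x = 0"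
      unfolding poly_prod using x fin by (intro prod_zero) (auto intro!: bexI[of _ x])
    ultimately show "x \<in> {x. poly Q x = 0}" by (simp add: Q_def subspace_poly_def)
  qed
  have "Q = 0"
  proof (rule ccontr)
    assume "Q \<noteq> 0"
    then have "card V \<le> card {x. poly Q x = 0}"
      using poly_roots_finite roots by (intro card_mono) blast+
    also have "\<dots> \<le> degree Q" using \<open>Q \<noteq> 0\<close> by (rule card_poly_roots_bound)
    finally show False using degQ n by linarith
  qed
  then have "poly Q x = 0" by simp
  then show ?thesis by (simp add: Q_def subspace_poly_def poly_prod algebra_simps)
qed

lemma subspace_poly_mult:
  fixes V :: "'a::field set"
  assumes "finite V" "c \<noteq> 0" "\<And>v. v \<in> V \<Longrightarrow> c * v \<in> V"
  shows "subspace_poly V (c * x) = c ^ card V * subspace_poly V x"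
proof -
  have "(*) c ` V = V"
    using assms by (intro endo_inj_surj) (auto simp: inj_on_def)
  then have "subspace_poly V (c * x) = (\<Prod>u\<in>V. c * x - c * u)"
    unfolding subspace_poly_def using \<open>c \<noteq> 0\<close>
    by (metis (no_types, lifting) inj_on_def mult_left_cancel prod.reindex_cong)
  also have "\<dots> = c ^ card V * subspace_poly V x"
    by (simp add: subspace_poly_def right_diff_distrib[symmetric] prod.distrib)
  finally show ?thesis .
qed

lemma subspace_poly_F_homogeneous:
  assumes sf: "is_subfield F" "finite F" and V: "F_subspace F V" "finite V"
    and card_V: "card V = card F ^ n" and c: "c \<in> F"
  shows "subspace_poly V (c * x) = c * subspace_poly V x"
proof (cases "c = 0")
  case True
  then show ?thesis using V by (simp add: subspace_poly_eq_0_iff F_subspace_def)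
next
  case False
  then have "subspace_poly V (c * x) = c ^ card V * subspace_poly V x"
    using V c by (intro subspace_poly_mult) (auto simp: F_subspace_def)
  then show ?thesis using subfield_power_card_power[OF sf c] card_V by simp
qed

lemma F_subspace_range:
  assumes add: "\<And>x y. f (x + y) = f x + f y" and homogeneous: "\<And>c x. c \<in> F \<Longrightarrow> f (c * x) = c * f x"
  shows "F_subspace F (range f)"
proof -
  have "f 0 = 0" using add[of 0 0] by (metis add_cancel_right_right)
  then show ?thesis unfolding F_subspace_def
    by (auto simp flip: add homogeneous)
qed

lemma card_UNIV_eq_card_range_mult_card_kernel:
  fixes f :: "'a::{ab_group_add,finite} \<Rightarrow> 'b::ab_group_add"
  assumes add: "\<And>x y. f (x + y) = f x + f y"
  shows "card (UNIV :: 'a set) = card (range f) * card {x. f x = 0}"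
proof -
  have fibre: "f -` {f x} = (+) x ` {x. f x = 0}" for x
  proof
    show "f -` {f x} \<subseteq> (+) x ` {x. f x = 0}"
    proof
      fix y assume "y \<in> f -` {f x}"
      then have "f (y - x) = 0" using add[of "y - x" x] by simp
      then show "y \<in> (+) x ` {x. f x = 0}" by (auto simp: image_iff intro!: bexI[of _ "y - x"])
    qed
    show "(+) x ` {x. f x = 0} \<subseteq> f -` {f x}" using add by auto
  qed
  have "(UNIV :: 'a set) = (\<Union>z\<in>range f. f -` {z})" by auto
  then have "card (UNIV :: 'a set) = card (\<Union>z\<in>range f. f -` {z})" by (rule arg_cong)
  also have "\<dots> = (\<Sum>z\<in>range f. card (f -` {z}))"
    by (rule card_UN_disjoint) auto
  also have "\<dots> = (\<Sum>z\<in>range f. card {x. f x = 0})"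
  proof (rule sum.cong)
    fix z assume "z \<in> range f"
    then obtain x where "z = f x" by blast
    then show "card (f -` {z}) = card {x. f x = 0}"
      by (simp add: fibre card_image)
  qed simp
  finally show ?thesis by simp
qed

text \<open>With \<open>\<gamma> = \<alpha> - \<alpha>\<^sup>*\<close> each factor is \<open>w\<^sup>-\<^sup>1 (b + \<gamma> w)\<close>; the extra factor \<open>b\<close> is the
  term \<open>w = 0\<close>, and \<open>W = -W\<close> turns \<open>\<Prod>\<^sub>w (b + \<gamma> w)\<close> into \<open>\<Prod>\<^sub>w (b - \<gamma> w)\<close>.\<close>

lemma prod_shifted_inverse_eq_subspace_poly:
  fixes W :: "'a::field set"
  assumes "finite W" "0 \<in> W" and uminus: "\<And>w. w \<in> W \<Longrightarrow> - w \<in> W" and "\<alpha> \<noteq> \<alpha>star"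
  shows "b * (\<Prod>w\<in>W - {0}. \<alpha> - (\<alpha>star - inverse w * b))
           = (\<Prod>w\<in>W - {0}. inverse w) * subspace_poly ((*) (\<alpha> - \<alpha>star) ` W) b"
proof -
  define \<gamma> where "\<gamma> = \<alpha> - \<alpha>star"
  have "\<gamma> \<noteq> 0" using \<open>\<alpha> \<noteq> \<alpha>star\<close> by (simp add: \<gamma>_def)
  have "(\<Prod>w\<in>W - {0}. \<alpha> - (\<alpha>star - inverse w * b)) = (\<Prod>w\<in>W - {0}. inverse w * (b + \<gamma> * w))"
    by (intro prod.cong) (auto simp: \<gamma>_def field_simps)
  then have "b * (\<Prod>w\<in>W - {0}. \<alpha> - (\<alpha>star - inverse w * b))
      = (\<Prod>w\<in>W - {0}. inverse w) * ((b + \<gamma> * 0) * (\<Prod>w\<in>W - {0}. b + \<gamma> * w))"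
    by (simp add: prod.distrib mult.left_commute)
  also have "(b + \<gamma> * 0) * (\<Prod>w\<in>W - {0}. b + \<gamma> * w) = (\<Prod>w\<in>W. b + \<gamma> * w)"
    using assms by (simp add: prod.remove[of W 0])
  also have "\<dots> = (\<Prod>w\<in>W. b - \<gamma> * w)"
    by (rule prod.reindex_bij_witness[where i=uminus and j=uminus]) (use uminus in auto)
  also have "\<dots> = subspace_poly ((*) \<gamma> ` W) b"
    unfolding subspace_poly_def using \<open>\<gamma> \<noteq> 0\<close> by (subst prod.reindex) (auto simp: inj_on_def)
  finally show ?thesis by (simp add: \<gamma>_def)
qed

lemma range_scaled_subspace_poly:
  fixes V :: "'a::{field,finite} set"
  assumes sf: "is_subfield F" and V: "F_subspace F V" "card V = card F ^ n" and "C \<noteq> 0"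
  defines "L \<equiv> \<lambda>x. C * subspace_poly V x"
  shows "F_subspace F (range L)" and "card (range L) * card V = card (UNIV :: 'a set)"
proof -
  have add: "L (x + y) = L x + L y" for x y
  proof -
    have "subspace_poly V (x + y) = subspace_poly V x + subspace_poly V y"
      using V(1) F_subspace_uminus[OF sf V(1)] by (intro subspace_poly_add) (auto simp: F_subspace_def)
    then show ?thesis by (simp add: L_def distrib_left)
  qed
  have "L (c * x) = c * L x" if "c \<in> F" for c x
    unfolding L_def using subspace_poly_F_homogeneous[OF sf _ V(1) _ V(2) that] by simp
  with add show "F_subspace F (range L)" by (rule F_subspace_range)
  have "{x. L x = 0} = V" using \<open>C \<noteq> 0\<close> by (auto simp: L_def subspace_poly_eq_0_iff)
  with card_UNIV_eq_card_range_mult_card_kernel[of L, OF add]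
  show "card (range L) * card V = card (UNIV :: 'a set)" by simp
qed

theorem lemma6:
  fixes Fq :: "'a::{field,finite} set"
    and q t s :: nat
    and W A :: "'a set"
    and \<alpha>star :: 'a
    and \<beta> :: "nat \<Rightarrow> 'a"
  assumes q_pp: "\<exists>p k. prime p \<and> k \<ge> 1 \<and> q = p ^ k"
    and t_ge: "t \<ge> 1" and s_lt: "s < t"
    and card_K: "card (UNIV :: 'a set) = q ^ t"
    and Fq_sub: "is_subfield Fq" and card_Fq: "card Fq = q"
    and W_sub: "F_subspace Fq W" and W_dim: "F_dim_eq Fq W s"
    and A_sub: "\<alpha>star \<in> A"
    and \<beta>_inj: "inj_on \<beta> {1..t}"
    and \<beta>_basis: "F_basis Fq (\<beta> ` {1..t}) UNIV"
  shows "\<forall>\<alpha>\<in>A - {\<alpha>star}.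
           F_rank Fq ((\<lambda>i. \<beta> i * (\<Prod>w\<in>W - {0}. (\<alpha> - (\<alpha>star - inverse w * \<beta> i)))) ` {1..t})
             \<le> t - s"
proof
  fix \<alpha> assume "\<alpha> \<in> A - {\<alpha>star}"
  then have "\<alpha> - \<alpha>star \<noteq> 0" by simp
  define V where "V = (*) (\<alpha> - \<alpha>star) ` W"
  define C where "C = (\<Prod>w\<in>W - {0}. inverse w)"
  define L where "L = (\<lambda>x. C * subspace_poly V x)"
  have g_eq: "b * (\<Prod>w\<in>W - {0}. \<alpha> - (\<alpha>star - inverse w * b)) = L b" for b
    unfolding L_def V_def C_def
    by (rule prod_shifted_inverse_eq_subspace_poly)
      (use W_sub F_subspace_uminus[OF Fq_sub W_sub] \<open>\<alpha> - \<alpha>star \<noteq> 0\<close> in \<open>auto simp: F_subspace_def\<close>)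
  have "F_subspace Fq V" unfolding V_def by (rule F_subspace_scale[OF W_sub])
  moreover have "card V = card Fq ^ s"
  proof -
    have "inj_on ((*) (\<alpha> - \<alpha>star)) W" using \<open>\<alpha> - \<alpha>star \<noteq> 0\<close> by (auto simp: inj_on_def)
    then show ?thesis using card_F_dim_eq[OF Fq_sub W_dim] by (simp add: V_def card_image)
  qed
  moreover have "C \<noteq> 0" by (simp add: C_def)
  ultimately have U: "F_subspace Fq (range L)" "card (range L) * card V = card (UNIV :: 'a set)"
    using range_scaled_subspace_poly[OF Fq_sub] unfolding L_def by blast+
  have "q > 0"
    using Fq_sub by (auto simp: is_subfield_def card_gt_0_iff simp flip: card_Fq)
  moreover have "q ^ t = q ^ (t - s) * q ^ s"
    using s_lt by (simp flip: power_add)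
  ultimately have "card (range L) = q ^ (t - s)"
    using U(2) \<open>card V = card Fq ^ s\<close> card_Fq card_K by simp
  moreover from g_eq have "(\<lambda>i. \<beta> i * (\<Prod>w\<in>W - {0}. \<alpha> - (\<alpha>star - inverse w * \<beta> i))) ` {1..t} \<subseteq> range L"
    by auto
  ultimately show "F_rank Fq ((\<lambda>i. \<beta> i * (\<Prod>w\<in>W - {0}. \<alpha> - (\<alpha>star - inverse w * \<beta> i))) ` {1..t})
      \<le> t - s"
    by (intro F_rank_le_if_subset_F_subspace[OF Fq_sub finite U(1) finite]) (simp_all add: card_Fq)
qed

end
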